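(* Let $a\in(0,1)$, $r\ge1$, $\kappa_1\in(a,1)$, and assume $r\le \dfrac{as}{\sqrt{5\log\big(2/(1-a/\kappa_1)\big)}}$. Then for every $\theta\in\mathcal{D}_{a,r}$, $$\langle M(\theta),\theta^*\rangle\ge (a/\kappa_1)\|\theta^*\|^2 .$$
   Context: Fix $d\ge1$, $\sigma>0$ and $\theta^*\in\mathbb{R}^d\setminus\{0\}$. Let $Y$ be distributed according to the mixture $\tfrac12 N(\theta^*,\sigma^2I_d)+\tfrac12 N(-\theta^*,\sigma^2I_d)$. Let $\omega(t):=1/(1+e^{-2t})$. The population EM operator is $M(\theta):=2\,\mathbb{E}\big[Y\,\omega(\langle\theta,Y\rangle/\sigma^2)\big]$. The signal-to-noise ratio is $s:=\|\theta^*\|/\sigma$. For $a\in(0,1)$ and $r\ge1$ define $\mathcal{H}_a:=\{\theta:\langle\theta,\theta^*\rangle\ge a\|\theta^*\|^2\}$, $\mathcal{B}_r:=\{\theta:\|\theta\|\le r\|\theta^*\|\}$ and $\mathcal{D}_{a,r}:=\mathcal{H}_a\cap\mathcal{B}_r$. *)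

theory Defs
  imports "HOL-Analysis.Analysis"
begin

definition omega :: "real \<Rightarrow> real" where
  "omega t = 1 / (1 + exp (-2 * t))"

definition gauss_density :: "'a::euclidean_space \<Rightarrow> real \<Rightarrow> 'a \<Rightarrow> real" where
  "gauss_density mu \<sigma> y =
     exp (- (norm (y - mu))\<^sup>2 / (2 * \<sigma>\<^sup>2)) / (sqrt (2 * pi * \<sigma>\<^sup>2)) ^ DIM('a)"

definition mix_density :: "'a::euclidean_space \<Rightarrow> real \<Rightarrow> 'a \<Rightarrow> real" where
  "mix_density \<theta>s \<sigma> y = gauss_density \<theta>s \<sigma> y / 2 + gauss_density (- \<theta>s) \<sigma> y / 2"

definition mix_measure :: "'a::euclidean_space \<Rightarrow> real \<Rightarrow> 'a measure" where
  "mix_measure \<theta>s \<sigma> = density lborel (\<lambda>y. ennreal (mix_density \<theta>s \<sigma> y))"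

definition EM_op :: "'a::euclidean_space \<Rightarrow> real \<Rightarrow> 'a \<Rightarrow> 'a" where
  "EM_op \<theta>s \<sigma> \<theta> =
     2 *\<^sub>R (\<integral>y. omega (inner \<theta> y / \<sigma>\<^sup>2) *\<^sub>R y \<partial>mix_measure \<theta>s \<sigma>)"

definition D_set :: "'a::euclidean_space \<Rightarrow> real \<Rightarrow> real \<Rightarrow> 'a set" where
  "D_set \<theta>s a r = {\<theta>. inner \<theta> \<theta>s \<ge> a * (norm \<theta>s)\<^sup>2 \<and> norm \<theta> \<le> r * norm \<theta>s}"

end

theory Submission
  imports Defs "HOL-Probability.Probability"
begin

text \<open>
  Substituting \<open>y \<mapsto> -y\<close> in the \<open>-\<theta>*\<close> component of the mixture gives
  \<open>\<langle>M(\<theta>), v\<rangle> = E[(2 \<omega>(\<langle>\<theta>,Y\<rangle>/\<sigma>\<^sup>2) - 1) \<langle>Y, v\<rangle>]\<close> with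
  \<open>Y \<sim> N(\<theta>*, \<sigma>\<^sup>2 I)\<close>. Since \<open>2\<omega> - 1 = 1 - 2(1 - \<omega>)\<close>,
  \<open>1 - \<omega>(t) \<le> exp (-k t)\<close> for \<open>0 \<le> k \<le> 2\<close> and
  \<open>|x| \<le> (exp (\<epsilon> x) + exp (-\<epsilon> x)) / (e \<epsilon>)\<close>, the deficit
  \<open>\<parallel>\<theta>*\<parallel>\<^sup>2 - \<langle>M(\<theta>),\<theta>*\<rangle>\<close> is bounded by two Gaussian moment generating
  functions, which are explicit. With \<open>\<epsilon> = 1/\<parallel>\<theta>*\<parallel>\<^sup>2\<close> and \<open>k = a/r\<^sup>2\<close> the
  signal-to-noise hypothesis makes each exponent at most \<open>1 + \<sigma>\<^sup>2/(2\<parallel>\<theta>*\<parallel>\<^sup>2) - 5L/2\<close>,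
  where \<open>L = log (2/(1 - a/\<kappa>\<^sub>1))\<close>, so the deficit is at most
  \<open>2 e\<^sup>-\<^sup>L \<parallel>\<theta>*\<parallel>\<^sup>2 = (1 - a/\<kappa>\<^sub>1) \<parallel>\<theta>*\<parallel>\<^sup>2\<close>.
\<close>

lemma gauss_density_eq_prod_normal_density:
  fixes \<mu> y :: "'a::euclidean_space"
  shows "gauss_density \<mu> \<sigma> y = (\<Prod>b\<in>Basis. normal_density (\<mu> \<bullet> b) \<sigma> (y \<bullet> b))"
proof -
  have "(norm (y - \<mu>))\<^sup>2 = (\<Sum>b\<in>Basis. (y \<bullet> b - \<mu> \<bullet> b)\<^sup>2)"
    unfolding power2_norm_eq_inner
    by (subst euclidean_inner) (simp add: inner_diff_left power2_eq_square)
  then have "exp (- (norm (y - \<mu>))\<^sup>2 / (2 * \<sigma>\<^sup>2))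
      = (\<Prod>b\<in>Basis. exp (- (y \<bullet> b - \<mu> \<bullet> b)\<^sup>2 / (2 * \<sigma>\<^sup>2)))"
    by (simp add: exp_sum[symmetric] sum_divide_distrib sum_negf)
  then show ?thesis
    unfolding gauss_density_def normal_density_def
    by (simp add: prod_dividef prod_constant)
qed

lemma gauss_density_nonneg: "0 \<le> gauss_density \<mu> \<sigma> y"
  unfolding gauss_density_def by simp

lemma borel_measurable_gauss_density[measurable]: "gauss_density \<mu> \<sigma> \<in> borel_measurable borel"
  unfolding gauss_density_def by measurable

lemma nn_integral_gauss_density:
  fixes \<mu> :: "'a::euclidean_space"
  assumes "\<sigma> > 0"
  shows "(\<integral>\<^sup>+y. ennreal (gauss_density \<mu> \<sigma> y) \<partial>lborel) = 1"
proof -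
  have "(\<integral>\<^sup>+y. ennreal (gauss_density \<mu> \<sigma> y) \<partial>lborel)
      = (\<integral>\<^sup>+y. (\<Prod>b\<in>Basis. ennreal (normal_density (\<mu> \<bullet> b) \<sigma> (y \<bullet> b))) \<partial>lborel)"
    by (simp add: gauss_density_eq_prod_normal_density prod_ennreal)
  also have "\<dots> = (\<Prod>b\<in>Basis. \<integral>\<^sup>+x. ennreal (normal_density (\<mu> \<bullet> b) \<sigma> x) \<partial>lborel)"
    by (rule nn_integral_lborel_prod) auto
  also have "\<dots> = 1"
    using assms by (simp add: nn_integral_eq_integral)
  finally show ?thesis .
qed

lemma integral_lborel_translate:
  fixes f :: "'a::euclidean_space \<Rightarrow> 'b::{banach, second_countable_topology}"
  assumes [measurable]: "f \<in> borel_measurable borel"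
  shows "(\<integral>x. f x \<partial>lborel) = (\<integral>x. f (c + x) \<partial>lborel)"
proof -
  have "(\<integral>x. f x \<partial>lborel) = (\<integral>x. f x \<partial>distr lborel borel ((+) c))"
    by (simp add: lborel_distr_plus)
  also have "\<dots> = (\<integral>x. f (c + x) \<partial>lborel)"
    by (subst integral_distr) auto
  finally show ?thesis .
qed

lemma integral_lborel_reflect:
  fixes f :: "'a::euclidean_space \<Rightarrow> 'b::{banach, second_countable_topology}"
  assumes [measurable]: "f \<in> borel_measurable borel"
  shows "(\<integral>x. f x \<partial>lborel) = (\<integral>x. f (- x) \<partial>lborel)"
proof -
  have "distr lborel borel uminus = (lborel :: 'a measure)"
    using lborel_affine[of "-1" "0::'a"] by (simp add: density_1)
  then have "(\<integral>x. f x \<partial>lborel) = (\<integral>x. f x \<partial>distr lborel borel uminus)"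
    by simp
  also have "\<dots> = (\<integral>x. f (- x) \<partial>lborel)"
    by (subst integral_distr) auto
  finally show ?thesis .
qed

lemma gauss_density_translate: "gauss_density \<mu> \<sigma> (\<mu> + z) = gauss_density 0 \<sigma> z"
  by (simp add: gauss_density_def)

lemma gauss_density_uminus: "gauss_density (- \<mu>) \<sigma> (- y) = gauss_density \<mu> \<sigma> y"
  unfolding gauss_density_def by (simp add: norm_minus_commute)

lemma exp_inner_mult_gauss_density:
  fixes b y \<mu> :: "'a::euclidean_space"
  assumes "\<sigma> > 0"
  shows "exp (b \<bullet> y) * gauss_density \<mu> \<sigma> y
       = exp (b \<bullet> \<mu> + \<sigma>\<^sup>2 * (norm b)\<^sup>2 / 2) * gauss_density (\<mu> + \<sigma>\<^sup>2 *\<^sub>R b) \<sigma> y"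
proof -
  have square: "(norm (y - (\<mu> + \<sigma>\<^sup>2 *\<^sub>R b)))\<^sup>2
      = (norm (y - \<mu>))\<^sup>2 - 2 * \<sigma>\<^sup>2 * (b \<bullet> y - b \<bullet> \<mu>) + \<sigma>\<^sup>2 * \<sigma>\<^sup>2 * (norm b)\<^sup>2"
    unfolding power2_norm_eq_inner
    by (simp add: inner_diff_left inner_diff_right inner_add_left inner_add_right
        inner_commute algebra_simps power2_eq_square)
  have "b \<bullet> y - (norm (y - \<mu>))\<^sup>2 / (2 * \<sigma>\<^sup>2)
      = b \<bullet> \<mu> + \<sigma>\<^sup>2 * (norm b)\<^sup>2 / 2 - (norm (y - (\<mu> + \<sigma>\<^sup>2 *\<^sub>R b)))\<^sup>2 / (2 * \<sigma>\<^sup>2)"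
    unfolding square using assms by (simp add: field_simps power2_eq_square)
  then have "exp (b \<bullet> y) * exp (- (norm (y - \<mu>))\<^sup>2 / (2 * \<sigma>\<^sup>2))
      = exp (b \<bullet> \<mu> + \<sigma>\<^sup>2 * (norm b)\<^sup>2 / 2) * exp (- (norm (y - (\<mu> + \<sigma>\<^sup>2 *\<^sub>R b)))\<^sup>2 / (2 * \<sigma>\<^sup>2))"
    by (simp add: exp_add[symmetric] algebra_simps)
  then show ?thesis
    unfolding gauss_density_def by (simp add: field_simps)
qed

lemma
  fixes b \<mu> :: "'a::euclidean_space"
  assumes "\<sigma> > 0"
  shows integrable_exp_inner_gauss_density:
      "integrable lborel (\<lambda>y. exp (b \<bullet> y) * gauss_density \<mu> \<sigma> y)"
    and integral_exp_inner_gauss_density: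
      "(\<integral>y. exp (b \<bullet> y) * gauss_density \<mu> \<sigma> y \<partial>lborel) = exp (b \<bullet> \<mu> + \<sigma>\<^sup>2 * (norm b)\<^sup>2 / 2)"
proof -
  let ?C = "exp (b \<bullet> \<mu> + \<sigma>\<^sup>2 * (norm b)\<^sup>2 / 2)"
  have "(\<integral>\<^sup>+y. ennreal (exp (b \<bullet> y) * gauss_density \<mu> \<sigma> y) \<partial>lborel)
      = (\<integral>\<^sup>+y. ennreal ?C * ennreal (gauss_density (\<mu> + \<sigma>\<^sup>2 *\<^sub>R b) \<sigma> y) \<partial>lborel)"
    using assms by (simp add: exp_inner_mult_gauss_density ennreal_mult gauss_density_nonneg)
  also have "\<dots> = ennreal ?C"
    using assms by (simp add: nn_integral_cmult nn_integral_gauss_density)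
  finally have nn: "(\<integral>\<^sup>+y. ennreal (exp (b \<bullet> y) * gauss_density \<mu> \<sigma> y) \<partial>lborel) = ennreal ?C" .
  then show "integrable lborel (\<lambda>y. exp (b \<bullet> y) * gauss_density \<mu> \<sigma> y)"
    by (intro integrableI_nn_integral_finite) (auto simp: gauss_density_nonneg)
  show "(\<integral>y. exp (b \<bullet> y) * gauss_density \<mu> \<sigma> y \<partial>lborel) = ?C"
    by (subst integral_eq_nn_integral) (auto simp: gauss_density_nonneg nn)
qed

lemma norm_le_sum_exp_inner:
  fixes y :: "'a::euclidean_space"
  shows "norm y \<le> (\<Sum>b\<in>Basis. exp (b \<bullet> y) + exp ((- b) \<bullet> y))"
proof -
  have "\<bar>t\<bar> \<le> exp t + exp (- t)" for t :: real
    using exp_ge_add_one_self[of t] exp_ge_add_one_self[of "- t"] exp_gt_zero[of t] exp_gt_zero[of "- t"]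
    unfolding abs_le_iff by linarith
  then have "\<bar>y \<bullet> b\<bar> \<le> exp (b \<bullet> y) + exp ((- b) \<bullet> y)" for b
    by (simp add: inner_commute)
  then have "(\<Sum>b\<in>Basis. \<bar>y \<bullet> b\<bar>) \<le> (\<Sum>b\<in>Basis. exp (b \<bullet> y) + exp ((- b) \<bullet> y))"
    by (rule sum_mono)
  with norm_le_l1[of y] show ?thesis
    by linarith
qed

lemma integrable_gauss_density_mult_norm:
  fixes \<mu> :: "'a::euclidean_space"
  assumes "\<sigma> > 0"
  shows "integrable lborel (\<lambda>y. gauss_density \<mu> \<sigma> y * norm y)"
proof (rule Bochner_Integration.integrable_bound)
  show "integrable lborel
      (\<lambda>y. \<Sum>b\<in>Basis. exp (b \<bullet> y) * gauss_density \<mu> \<sigma> y + exp ((- b) \<bullet> y) * gauss_density \<mu> \<sigma> y)"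
    using assms by (intro Bochner_Integration.integrable_sum Bochner_Integration.integrable_add
        integrable_exp_inner_gauss_density)
  show "AE y in lborel. norm (gauss_density \<mu> \<sigma> y * norm y)
      \<le> norm (\<Sum>b\<in>Basis. exp (b \<bullet> y) * gauss_density \<mu> \<sigma> y + exp ((- b) \<bullet> y) * gauss_density \<mu> \<sigma> y)"
  proof (rule AE_I2)
    fix y :: 'a
    have "gauss_density \<mu> \<sigma> y * norm y
        \<le> gauss_density \<mu> \<sigma> y * (\<Sum>b\<in>Basis. exp (b \<bullet> y) + exp ((- b) \<bullet> y))"
      by (intro mult_left_mono norm_le_sum_exp_inner gauss_density_nonneg)
    also have "\<dots> = (\<Sum>b\<in>Basis. exp (b \<bullet> y) * gauss_density \<mu> \<sigma> y + exp ((- b) \<bullet> y) * gauss_density \<mu> \<sigma> y)"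
      by (simp add: sum_distrib_left distrib_left mult.commute)
    finally show "norm (gauss_density \<mu> \<sigma> y * norm y)
        \<le> norm (\<Sum>b\<in>Basis. exp (b \<bullet> y) * gauss_density \<mu> \<sigma> y + exp ((- b) \<bullet> y) * gauss_density \<mu> \<sigma> y)"
      by (simp add: gauss_density_nonneg)
  qed
qed measurable

lemma integrable_gauss_density_scaleR:
  fixes \<mu> :: "'a::euclidean_space" and f :: "'a \<Rightarrow> 'b::{banach, second_countable_topology}"
  assumes "\<sigma> > 0" and [measurable]: "f \<in> borel_measurable borel"
    and f_le: "\<And>y. norm (f y) \<le> C * norm y"
  shows "integrable lborel (\<lambda>y. gauss_density \<mu> \<sigma> y *\<^sub>R f y)"
proof (rule Bochner_Integration.integrable_bound)
  show "integrable lborel (\<lambda>y. C * (gauss_density \<mu> \<sigma> y * norm y))"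
    by (rule Bochner_Integration.integrable_mult_right, rule integrable_gauss_density_mult_norm[OF assms(1)])
  show "AE y in lborel. norm (gauss_density \<mu> \<sigma> y *\<^sub>R f y) \<le> norm (C * (gauss_density \<mu> \<sigma> y * norm y))"
  proof (rule AE_I2)
    fix y
    have "gauss_density \<mu> \<sigma> y * norm (f y) \<le> gauss_density \<mu> \<sigma> y * (C * norm y)"
      by (intro mult_left_mono f_le gauss_density_nonneg)
    then show "norm (gauss_density \<mu> \<sigma> y *\<^sub>R f y) \<le> norm (C * (gauss_density \<mu> \<sigma> y * norm y))"
      by (simp add: gauss_density_nonneg algebra_simps)
  qed
qed measurable

lemma integral_gauss_density_scaleR_self:
  fixes \<mu> :: "'a::euclidean_space"
  assumes "\<sigma> > 0"
  shows "(\<integral>y. gauss_density \<mu> \<sigma> y *\<^sub>R y \<partial>lborel) = \<mu>"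
proof -
  let ?g = "gauss_density (0::'a) \<sigma>"
  have int_g: "integrable lborel ?g" and int_gz: "integrable lborel (\<lambda>z. ?g z *\<^sub>R z)"
    using integrable_exp_inner_gauss_density[OF assms, of 0 "0::'a"]
      integrable_gauss_density_scaleR[OF assms, of "\<lambda>z. z" 1] by simp_all
  have "(\<integral>z. ?g z *\<^sub>R z \<partial>lborel) = (\<integral>z. ?g (- z) *\<^sub>R (- z) \<partial>lborel)"
    by (rule integral_lborel_reflect) measurable
  also have "\<dots> = - (\<integral>z. ?g z *\<^sub>R z \<partial>lborel)"
    using gauss_density_uminus[of "0::'a" \<sigma>] by simp
  finally have odd: "(\<integral>z. ?g z *\<^sub>R z \<partial>lborel) = 0"
    by (simp add: eq_neg_iff_add_eq_0 flip: scaleR_2)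
  have "(\<integral>y. gauss_density \<mu> \<sigma> y *\<^sub>R y \<partial>lborel) = (\<integral>z. ?g z *\<^sub>R \<mu> + ?g z *\<^sub>R z \<partial>lborel)"
    by (subst integral_lborel_translate[where c = \<mu>])
      (simp_all add: gauss_density_translate scaleR_add_right)
  also have "\<dots> = \<mu>"
    using int_g int_gz integral_exp_inner_gauss_density[OF assms, of 0 "0::'a"] by (simp add: odd)
  finally show ?thesis .
qed

lemma
  fixes \<mu> v :: "'a::euclidean_space"
  assumes "\<sigma> > 0"
  shows integrable_gauss_density_mult_inner:
      "integrable lborel (\<lambda>y. gauss_density \<mu> \<sigma> y * (y \<bullet> v))"
    and integral_gauss_density_mult_inner:
      "(\<integral>y. gauss_density \<mu> \<sigma> y * (y \<bullet> v) \<partial>lborel) = \<mu> \<bullet> v"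
proof -
  have int: "integrable lborel (\<lambda>y. gauss_density \<mu> \<sigma> y *\<^sub>R y)"
    by (rule integrable_gauss_density_scaleR[OF assms, of _ 1]) auto
  then show "integrable lborel (\<lambda>y. gauss_density \<mu> \<sigma> y * (y \<bullet> v))"
    using integrable_inner_left[OF int, of v] by simp
  have "(\<integral>y. gauss_density \<mu> \<sigma> y * (y \<bullet> v) \<partial>lborel) = (\<integral>y. (gauss_density \<mu> \<sigma> y *\<^sub>R y) \<bullet> v \<partial>lborel)"
    by simp
  also have "\<dots> = (\<integral>y. gauss_density \<mu> \<sigma> y *\<^sub>R y \<partial>lborel) \<bullet> v"
    by (rule integral_inner_left) (rule int)
  finally show "(\<integral>y. gauss_density \<mu> \<sigma> y * (y \<bullet> v) \<partial>lborel) = \<mu> \<bullet> v"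
    using integral_gauss_density_scaleR_self[OF assms, where \<mu> = \<mu>] by simp
qed

lemma omega_nonneg: "0 \<le> omega t"
  unfolding omega_def by (simp add: add_pos_pos)

lemma omega_le_one: "omega t \<le> 1"
  unfolding omega_def by (simp add: add_pos_pos)

lemma omega_uminus: "omega (- t) = 1 - omega t"
proof -
  have e: "exp (-2 * t) = 1 / exp (2 * t)"
    by (simp add: exp_minus field_simps)
  have "0 < 1 + exp (2 * t)" "0 < 1 + exp (t * 2)"
    by (simp_all add: add_pos_pos)
  then have "1 - omega t = omega (- t)"
    unfolding omega_def e by (simp add: field_simps add_divide_distrib[symmetric])
  then show ?thesis ..
qed

lemma borel_measurable_omega[measurable]: "omega \<in> borel_measurable borel"
  unfolding omega_def[abs_def] by measurable

lemma one_minus_omega_le_exp: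
  assumes "0 \<le> k" "k \<le> 2"
  shows "1 - omega t \<le> exp (- k * t)"
proof (cases "t \<ge> 0")
  case True
  have "1 - omega t = 1 / (1 + exp (2 * t))"
    using omega_uminus[of t] by (simp add: omega_def)
  also have "\<dots> \<le> 1 / exp (2 * t)"
    by (intro divide_left_mono) (auto intro!: mult_pos_pos add_pos_pos)
  also have "\<dots> = exp (- 2 * t)"
    by (simp add: exp_minus field_simps)
  also have "\<dots> \<le> exp (- k * t)"
    using True assms by (simp add: mult_right_mono)
  finally show ?thesis .
next
  case False
  then have "1 \<le> exp (- k * t)"
    using assms by (simp add: mult_nonneg_nonpos)
  then show ?thesis
    using omega_nonneg[of t] by linarith
qed

lemma abs_le_exp_scaled:
  fixes x \<epsilon> :: real
  assumes "\<epsilon> > 0"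
  shows "\<bar>x\<bar> \<le> (exp (\<epsilon> * x) + exp (- \<epsilon> * x)) / (exp 1 * \<epsilon>)"
proof -
  have "\<epsilon> * \<bar>x\<bar> \<le> exp (\<epsilon> * \<bar>x\<bar> - 1)"
    using exp_ge_add_one_self[of "\<epsilon> * \<bar>x\<bar> - 1"] by linarith
  also have "\<dots> = exp (\<epsilon> * \<bar>x\<bar>) / exp 1"
    by (simp add: exp_diff)
  also have "exp (\<epsilon> * \<bar>x\<bar>) \<le> exp (\<epsilon> * x) + exp (- \<epsilon> * x)"
    by (cases "x \<ge> 0") (auto simp: add_increasing add_increasing2 less_imp_le)
  finally have "\<epsilon> * \<bar>x\<bar> \<le> (exp (\<epsilon> * x) + exp (- \<epsilon> * x)) / exp 1"
    by (simp add: divide_right_mono)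
  then show ?thesis
    using assms by (simp add: field_simps)
qed

lemma abs_two_omega_minus_one_mult_le: "\<bar>(2 * omega t - 1) * x\<bar> \<le> \<bar>x\<bar>"
  using omega_nonneg[of t] omega_le_one[of t] by (simp add: abs_mult mult_left_le_one_le)

lemma two_omega_minus_one_mult_ge:
  fixes k t x \<epsilon> :: real
  assumes "0 \<le> k" "k \<le> 2" "\<epsilon> > 0"
  shows "x - 2 * exp (- k * t) * ((exp (\<epsilon> * x) + exp (- \<epsilon> * x)) / (exp 1 * \<epsilon>))
      \<le> (2 * omega t - 1) * x"
proof -
  have "(1 - omega t) * x \<le> (1 - omega t) * \<bar>x\<bar>"
    using omega_le_one[of t] by (intro mult_left_mono) auto
  also have "\<dots> \<le> exp (- k * t) * ((exp (\<epsilon> * x) + exp (- \<epsilon> * x)) / (exp 1 * \<epsilon>))"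
    using one_minus_omega_le_exp[OF assms(1,2)] abs_le_exp_scaled[OF assms(3)] omega_le_one[of t]
    by (intro mult_mono) auto
  finally have "(1 - omega t) * x \<le> exp (- k * t) * ((exp (\<epsilon> * x) + exp (- \<epsilon> * x)) / (exp 1 * \<epsilon>))" .
  moreover have "(2 * omega t - 1) * x = x - 2 * ((1 - omega t) * x)"
    by (simp add: algebra_simps)
  ultimately show ?thesis
    unfolding mult.assoc by linarith
qed

lemma mix_density_nonneg: "0 \<le> mix_density \<theta>s \<sigma> y"
  unfolding mix_density_def by (simp add: gauss_density_nonneg)

lemma borel_measurable_mix_density[measurable]: "mix_density \<theta>s \<sigma> \<in> borel_measurable borel"
  unfolding mix_density_def[abs_def] by measurable

lemma integrable_mix_measure:
  fixes \<theta>s :: "'a::euclidean_space" and f :: "'a \<Rightarrow> 'b::{banach, second_countable_topology}"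
  assumes "\<sigma> > 0" and [measurable]: "f \<in> borel_measurable borel"
    and f_le: "\<And>y. norm (f y) \<le> C * norm y"
  shows "integrable (mix_measure \<theta>s \<sigma>) f"
proof -
  have int: "integrable lborel (\<lambda>y. gauss_density \<mu> \<sigma> y *\<^sub>R f y)" for \<mu>
    by (rule integrable_gauss_density_scaleR[OF assms(1) _ f_le]) measurable
  have "integrable lborel (\<lambda>y. (1 / 2) *\<^sub>R (gauss_density \<theta>s \<sigma> y *\<^sub>R f y)
      + (1 / 2) *\<^sub>R (gauss_density (- \<theta>s) \<sigma> y *\<^sub>R f y))"
    by (intro Bochner_Integration.integrable_add integrable_scaleR_right int)
  then have "integrable lborel (\<lambda>y. mix_density \<theta>s \<sigma> y *\<^sub>R f y)"
    by (simp add: mix_density_def scaleR_add_left)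
  then show ?thesis
    unfolding mix_measure_def by (subst integrable_density) (auto simp: mix_density_nonneg)
qed

lemma integral_mix_density_symmetrize:
  fixes \<theta>s :: "'a::euclidean_space" and f :: "'a \<Rightarrow> real"
  assumes "\<sigma> > 0" and [measurable]: "f \<in> borel_measurable borel"
    and f_le: "\<And>y. \<bar>f y\<bar> \<le> C * norm y"
  shows "(\<integral>y. mix_density \<theta>s \<sigma> y * f y \<partial>lborel)
      = (\<integral>y. gauss_density \<theta>s \<sigma> y * (f y + f (- y)) \<partial>lborel) / 2"
proof -
  have int: "integrable lborel (\<lambda>y. gauss_density \<mu> \<sigma> y * g y)"
    if [measurable]: "g \<in> borel_measurable borel" and "\<And>y. \<bar>g y\<bar> \<le> C * norm y"
    for \<mu> :: 'a and g
    using integrable_gauss_density_scaleR[OF assms(1), of g C \<mu>] that by simp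
  have "\<bar>f (- y)\<bar> \<le> C * norm y" for y
    using f_le[of "- y"] by simp
  then have int_reflect: "integrable lborel (\<lambda>y. gauss_density \<theta>s \<sigma> y * f (- y))"
    by (intro int) auto
  have "(\<integral>y. gauss_density (- \<theta>s) \<sigma> y * f y \<partial>lborel)
      = (\<integral>y. gauss_density (- \<theta>s) \<sigma> (- y) * f (- y) \<partial>lborel)"
    by (rule integral_lborel_reflect) measurable
  also have "\<dots> = (\<integral>y. gauss_density \<theta>s \<sigma> y * f (- y) \<partial>lborel)"
    by (simp add: gauss_density_uminus)
  finally have reflect: "(\<integral>y. gauss_density (- \<theta>s) \<sigma> y * f y \<partial>lborel)
      = (\<integral>y. gauss_density \<theta>s \<sigma> y * f (- y) \<partial>lborel)" .
  have "(\<integral>y. mix_density \<theta>s \<sigma> y * f y \<partial>lborel)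
      = (\<integral>y. gauss_density \<theta>s \<sigma> y * f y / 2 + gauss_density (- \<theta>s) \<sigma> y * f y / 2 \<partial>lborel)"
    by (simp add: mix_density_def algebra_simps)
  also have "\<dots> = ((\<integral>y. gauss_density \<theta>s \<sigma> y * f y \<partial>lborel)
      + (\<integral>y. gauss_density \<theta>s \<sigma> y * f (- y) \<partial>lborel)) / 2"
    using int[OF assms(2) f_le, of \<theta>s] int[OF assms(2) f_le, of "- \<theta>s"] by (simp add: reflect)
  also have "\<dots> = (\<integral>y. gauss_density \<theta>s \<sigma> y * (f y + f (- y)) \<partial>lborel) / 2"
    using int[OF assms(2) f_le, of \<theta>s] int_reflect by (simp add: distrib_left)
  finally show ?thesis .
qed

lemma inner_EM_op:
  fixes \<theta>s \<theta> v :: "'a::euclidean_space"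
  assumes "\<sigma> > 0"
  shows "inner (EM_op \<theta>s \<sigma> \<theta>) v
      = (\<integral>y. gauss_density \<theta>s \<sigma> y * ((2 * omega (\<theta> \<bullet> y / \<sigma>\<^sup>2) - 1) * (y \<bullet> v)) \<partial>lborel)"
proof -
  define F where "F y = omega (\<theta> \<bullet> y / \<sigma>\<^sup>2) *\<^sub>R y" for y
  define f where "f y = F y \<bullet> v" for y
  have [measurable]: "F \<in> borel_measurable borel" "f \<in> borel_measurable borel"
    unfolding F_def f_def by measurable
  have F_le: "norm (F y) \<le> 1 * norm y" for y
    using omega_nonneg omega_le_one by (simp add: F_def mult_left_le_one_le)
  have f_le: "\<bar>f y\<bar> \<le> norm v * norm y" for y
  proof -
    have "\<bar>f y\<bar> \<le> norm v * norm (F y)"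
      using Cauchy_Schwarz_ineq2[of "F y" v] by (simp add: f_def mult.commute)
    also have "\<dots> \<le> norm v * norm y"
      using F_le[of y] by (simp add: mult_left_mono)
    finally show ?thesis .
  qed
  have "(\<integral>y. F y \<partial>mix_measure \<theta>s \<sigma>) \<bullet> v = (\<integral>y. f y \<partial>mix_measure \<theta>s \<sigma>)"
    unfolding f_def by (rule integral_inner_left[symmetric]) (rule integrable_mix_measure[OF assms _ F_le], simp)
  also have "\<dots> = (\<integral>y. mix_density \<theta>s \<sigma> y * f y \<partial>lborel)"
    unfolding mix_measure_def by (subst integral_density) (auto simp: mix_density_nonneg)
  finally have "inner (EM_op \<theta>s \<sigma> \<theta>) v = 2 * (\<integral>y. mix_density \<theta>s \<sigma> y * f y \<partial>lborel)"
    by (simp add: EM_op_def F_def)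
  also have "\<dots> = (\<integral>y. gauss_density \<theta>s \<sigma> y * (f y + f (- y)) \<partial>lborel)"
    using integral_mix_density_symmetrize[OF assms _ f_le, where \<theta>s = \<theta>s] by simp
  also have "\<dots> = (\<integral>y. gauss_density \<theta>s \<sigma> y * ((2 * omega (\<theta> \<bullet> y / \<sigma>\<^sup>2) - 1) * (y \<bullet> v)) \<partial>lborel)"
    by (simp add: F_def f_def omega_uminus algebra_simps)
  finally show ?thesis .
qed

lemma two_omega_minus_one_inner_ge:
  fixes \<theta>s \<theta> y :: "'a::euclidean_space" and \<sigma> \<epsilon> c :: real
  assumes "\<sigma> > 0" "\<epsilon> > 0" "0 \<le> c" "c * \<sigma>\<^sup>2 \<le> 2"
  shows "y \<bullet> \<theta>s - 2 / (exp 1 * \<epsilon>)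
        * (exp ((\<epsilon> *\<^sub>R \<theta>s - c *\<^sub>R \<theta>) \<bullet> y) + exp (((- \<epsilon>) *\<^sub>R \<theta>s - c *\<^sub>R \<theta>) \<bullet> y))
      \<le> (2 * omega (\<theta> \<bullet> y / \<sigma>\<^sup>2) - 1) * (y \<bullet> \<theta>s)"
proof -
  have "exp (- (c * \<sigma>\<^sup>2) * (\<theta> \<bullet> y / \<sigma>\<^sup>2)) * (exp (\<epsilon> * (y \<bullet> \<theta>s)) + exp (- \<epsilon> * (y \<bullet> \<theta>s)))
      = exp ((\<epsilon> *\<^sub>R \<theta>s - c *\<^sub>R \<theta>) \<bullet> y) + exp (((- \<epsilon>) *\<^sub>R \<theta>s - c *\<^sub>R \<theta>) \<bullet> y)"
    using assms(1) by (simp add: exp_add[symmetric] inner_diff_left inner_commute algebra_simps)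
  moreover have "y \<bullet> \<theta>s - 2 * exp (- (c * \<sigma>\<^sup>2) * (\<theta> \<bullet> y / \<sigma>\<^sup>2))
        * ((exp (\<epsilon> * (y \<bullet> \<theta>s)) + exp (- \<epsilon> * (y \<bullet> \<theta>s))) / (exp 1 * \<epsilon>))
      \<le> (2 * omega (\<theta> \<bullet> y / \<sigma>\<^sup>2) - 1) * (y \<bullet> \<theta>s)"
    using assms by (intro two_omega_minus_one_mult_ge) auto
  ultimately show ?thesis
    by (simp add: field_simps)
qed

lemma inner_EM_op_ge:
  fixes \<theta>s \<theta> :: "'a::euclidean_space" and \<sigma> \<epsilon> c :: real
  assumes "\<sigma> > 0" "\<epsilon> > 0" "0 \<le> c" "c * \<sigma>\<^sup>2 \<le> 2"
  defines "E \<equiv> \<lambda>b. b \<bullet> \<theta>s + \<sigma>\<^sup>2 * (norm b)\<^sup>2 / 2"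
  shows "(norm \<theta>s)\<^sup>2 - 2 / (exp 1 * \<epsilon>) * (exp (E (\<epsilon> *\<^sub>R \<theta>s - c *\<^sub>R \<theta>)) + exp (E ((- \<epsilon>) *\<^sub>R \<theta>s - c *\<^sub>R \<theta>)))
      \<le> inner (EM_op \<theta>s \<sigma> \<theta>) \<theta>s"
proof -
  define b1 b2 where "b1 = \<epsilon> *\<^sub>R \<theta>s - c *\<^sub>R \<theta>" and "b2 = (- \<epsilon>) *\<^sub>R \<theta>s - c *\<^sub>R \<theta>"
  define g where "g = gauss_density \<theta>s \<sigma>"
  define K where "K = 2 / (exp 1 * \<epsilon>)"
  have [measurable]: "g \<in> borel_measurable borel"
    by (simp add: g_def)
  have int_exp: "integrable lborel (\<lambda>y. exp (b \<bullet> y) * g y)" for b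
    unfolding g_def by (rule integrable_exp_inner_gauss_density[OF assms(1)])
  have int_inner: "integrable lborel (\<lambda>y. g y * (y \<bullet> \<theta>s))"
    unfolding g_def by (rule integrable_gauss_density_mult_inner[OF assms(1)])
  have "norm ((2 * omega (\<theta> \<bullet> y / \<sigma>\<^sup>2) - 1) * (y \<bullet> \<theta>s)) \<le> norm \<theta>s * norm y" for y
    unfolding real_norm_def
    by (rule order_trans[OF abs_two_omega_minus_one_mult_le])
      (use Cauchy_Schwarz_ineq2[of y \<theta>s] in \<open>simp add: mult.commute\<close>)
  then have "integrable lborel (\<lambda>y. g y *\<^sub>R ((2 * omega (\<theta> \<bullet> y / \<sigma>\<^sup>2) - 1) * (y \<bullet> \<theta>s)))"
    unfolding g_def by (rule integrable_gauss_density_scaleR[OF assms(1), rotated]) measurable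
  then have int_omega: "integrable lborel (\<lambda>y. g y * ((2 * omega (\<theta> \<bullet> y / \<sigma>\<^sup>2) - 1) * (y \<bullet> \<theta>s)))"
    by simp
  have "(norm \<theta>s)\<^sup>2 - K * (exp (E b1) + exp (E b2))
      = (\<integral>y. g y * (y \<bullet> \<theta>s) - K * (exp (b1 \<bullet> y) * g y + exp (b2 \<bullet> y) * g y) \<partial>lborel)"
    using assms(1) int_exp int_inner
    by (simp add: E_def g_def integral_gauss_density_mult_inner integral_exp_inner_gauss_density
        power2_norm_eq_inner)
  also have "\<dots> \<le> (\<integral>y. g y * ((2 * omega (\<theta> \<bullet> y / \<sigma>\<^sup>2) - 1) * (y \<bullet> \<theta>s)) \<partial>lborel)"
  proof (rule integral_mono)
    fix y
    have "g y * (y \<bullet> \<theta>s - K * (exp (b1 \<bullet> y) + exp (b2 \<bullet> y)))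
        \<le> g y * ((2 * omega (\<theta> \<bullet> y / \<sigma>\<^sup>2) - 1) * (y \<bullet> \<theta>s))"
      unfolding g_def K_def b1_def b2_def
      by (rule mult_left_mono[OF two_omega_minus_one_inner_ge[OF assms(1-4)] gauss_density_nonneg])
    then show "g y * (y \<bullet> \<theta>s) - K * (exp (b1 \<bullet> y) * g y + exp (b2 \<bullet> y) * g y)
        \<le> g y * ((2 * omega (\<theta> \<bullet> y / \<sigma>\<^sup>2) - 1) * (y \<bullet> \<theta>s))"
      by (simp add: algebra_simps)
  qed (use int_exp int_inner int_omega in auto)
  also have "\<dots> = inner (EM_op \<theta>s \<sigma> \<theta>) \<theta>s"
    unfolding g_def by (rule inner_EM_op[OF assms(1), symmetric])
  finally show ?thesis
    by (simp add: K_def b1_def b2_def)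
qed

lemma D_set_inner_bounds:
  fixes \<theta>s \<theta> :: "'a::euclidean_space"
  assumes "\<theta> \<in> D_set \<theta>s a r"
  shows "a * (norm \<theta>s)\<^sup>2 \<le> \<theta> \<bullet> \<theta>s" and "\<theta> \<bullet> \<theta>s \<le> r * (norm \<theta>s)\<^sup>2"
    and "(norm \<theta>)\<^sup>2 \<le> r\<^sup>2 * (norm \<theta>s)\<^sup>2"
proof -
  have norm_\<theta>: "norm \<theta> \<le> r * norm \<theta>s"
    using assms by (simp add: D_set_def)
  show "a * (norm \<theta>s)\<^sup>2 \<le> \<theta> \<bullet> \<theta>s"
    using assms by (simp add: D_set_def)
  have "\<theta> \<bullet> \<theta>s \<le> norm \<theta> * norm \<theta>s"
    by (rule norm_cauchy_schwarz)
  also have "\<dots> \<le> r * norm \<theta>s * norm \<theta>s"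
    using norm_\<theta> by (simp add: mult_right_mono)
  finally show "\<theta> \<bullet> \<theta>s \<le> r * (norm \<theta>s)\<^sup>2"
    by (simp add: power2_eq_square mult.assoc)
  show "(norm \<theta>)\<^sup>2 \<le> r\<^sup>2 * (norm \<theta>s)\<^sup>2"
    using norm_\<theta> by (metis norm_ge_zero power_mono power_mult_distrib)
qed

lemma gauss_log_mgf_expand:
  fixes \<theta>s \<theta> :: "'a::euclidean_space" and s c \<sigma> :: real
  assumes "\<theta>s \<noteq> 0" "\<bar>s\<bar> = 1"
  defines "b \<equiv> (s / (norm \<theta>s)\<^sup>2) *\<^sub>R \<theta>s - c *\<^sub>R \<theta>"
  shows "b \<bullet> \<theta>s + \<sigma>\<^sup>2 * (norm b)\<^sup>2 / 2
      = s * (1 - \<sigma>\<^sup>2 * c * (\<theta> \<bullet> \<theta>s) / (norm \<theta>s)\<^sup>2) + \<sigma>\<^sup>2 / (2 * (norm \<theta>s)\<^sup>2)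
        + (\<sigma>\<^sup>2 * c\<^sup>2 * (norm \<theta>)\<^sup>2 / 2 - c * (\<theta> \<bullet> \<theta>s))"
proof -
  define T m N where "T = (norm \<theta>s)\<^sup>2" and "m = \<theta> \<bullet> \<theta>s" and "N = (norm \<theta>)\<^sup>2"
  have T: "T > 0"
    using assms(1) by (simp add: T_def)
  have \<theta>s\<theta>s: "\<theta>s \<bullet> \<theta>s = T" and \<theta>\<theta>: "\<theta> \<bullet> \<theta> = N" and \<theta>s\<theta>: "\<theta>s \<bullet> \<theta> = m"
    by (simp_all add: T_def N_def m_def power2_norm_eq_inner inner_commute)
  have b_eq: "b = (s / T) *\<^sub>R \<theta>s - c *\<^sub>R \<theta>"
    by (simp add: b_def T_def)
  have b_inner: "b \<bullet> \<theta>s = s - c * m"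
    using T by (simp add: b_eq inner_diff_left \<theta>s\<theta>s m_def)
  have "(norm b)\<^sup>2 = (s / T)\<^sup>2 * T - 2 * (s / T) * c * m + c\<^sup>2 * N"
    unfolding power2_norm_eq_inner b_eq
    by (simp add: inner_diff_left inner_diff_right \<theta>s\<theta>s \<theta>\<theta> \<theta>s\<theta> m_def inner_commute
        power2_eq_square algebra_simps)
  also have "\<dots> = s\<^sup>2 / T - 2 * s * c * m / T + c\<^sup>2 * N"
    using T by (simp add: power2_eq_square)
  finally have b_norm: "(norm b)\<^sup>2 = 1 / T - 2 * s * c * m / T + c\<^sup>2 * N"
    using assms(2) power2_abs[of s] by simp
  show ?thesis
    unfolding b_inner b_norm T_def[symmetric] m_def[symmetric] N_def[symmetric]
    by (simp add: algebra_simps add_divide_distrib diff_divide_distrib)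
qed

lemma gauss_log_mgf_le:
  fixes \<theta>s \<theta> :: "'a::euclidean_space" and s a r \<sigma> L :: real
  assumes "\<sigma> > 0" "\<theta>s \<noteq> 0" "0 < a" "a < 1" "r \<ge> 1" "\<theta> \<in> D_set \<theta>s a r" "\<bar>s\<bar> = 1"
    and snr: "5 * L * r\<^sup>2 * \<sigma>\<^sup>2 \<le> a\<^sup>2 * (norm \<theta>s)\<^sup>2"
  defines "b \<equiv> (s / (norm \<theta>s)\<^sup>2) *\<^sub>R \<theta>s - (a / (r\<^sup>2 * \<sigma>\<^sup>2)) *\<^sub>R \<theta>"
  shows "b \<bullet> \<theta>s + \<sigma>\<^sup>2 * (norm b)\<^sup>2 / 2 \<le> 1 + \<sigma>\<^sup>2 / (2 * (norm \<theta>s)\<^sup>2) - 5 * L / 2"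
proof -
  define T m N c where "T = (norm \<theta>s)\<^sup>2" and "m = \<theta> \<bullet> \<theta>s" and "N = (norm \<theta>)\<^sup>2"
    and "c = a / (r\<^sup>2 * \<sigma>\<^sup>2)"
  have T: "T > 0" and c: "c > 0" and c_eq: "\<sigma>\<^sup>2 * c * r\<^sup>2 = a"
    using assms(1-5) by (auto simp: T_def c_def)
  have am: "a * T \<le> m" and mr: "m \<le> r * T" and Nr: "N \<le> r\<^sup>2 * T"
    using D_set_inner_bounds[OF assms(6)] by (simp_all add: T_def m_def N_def)
  have "0 \<le> a * T"
    using T assms(3) by simp
  with am have "0 \<le> m"
    by linarith
  have "\<sigma>\<^sup>2 * c * m / T * r\<^sup>2 = a * (m / T)"
    using T c_eq by (simp add: field_simps)
  also have "\<dots> \<le> 1 * r"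
    using T mr assms(3,4) \<open>0 \<le> m\<close> by (intro mult_mono) (auto simp: divide_le_eq mult.commute)
  also have "\<dots> \<le> 1 * r\<^sup>2"
    using mult_right_mono[of 1 r r] assms(5) by (simp add: power2_eq_square)
  finally have "\<sigma>\<^sup>2 * c * m / T \<le> 1"
    by (rule mult_right_le_imp_le) (use assms(5) in simp)
  moreover have "0 \<le> \<sigma>\<^sup>2 * c * m / T"
    using T c \<open>0 \<le> m\<close> by simp
  ultimately have "s * (1 - \<sigma>\<^sup>2 * c * m / T) \<le> 1"
    using assms(7) by (cases "s \<ge> 0") auto
  moreover have "\<sigma>\<^sup>2 * c\<^sup>2 * N / 2 - c * m \<le> - 5 * L / 2"
  proof -
    have "\<sigma>\<^sup>2 * c\<^sup>2 * N \<le> \<sigma>\<^sup>2 * c\<^sup>2 * (r\<^sup>2 * T)"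
      using Nr by (simp add: mult_left_mono)
    also have "\<dots> = c * a * T"
      using c_eq by (simp add: power2_eq_square algebra_simps)
    finally have "\<sigma>\<^sup>2 * c\<^sup>2 * N \<le> c * a * T" .
    moreover have "c * a * T \<le> c * m"
      using mult_left_mono[OF am, of c] c by (simp add: mult.assoc)
    moreover have "5 * L \<le> c * a * T"
      using snr assms(1) assms(5) unfolding c_def T_def
      by (simp add: field_simps power2_eq_square)
    ultimately show ?thesis
      by linarith
  qed
  ultimately show ?thesis
    using gauss_log_mgf_expand[OF assms(2,7), where c = c and \<sigma> = \<sigma> and \<theta> = \<theta>]
    unfolding b_def T_def m_def N_def c_def by linarith
qed

lemma exp_exponent_sum_le:
  fixes T \<sigma> L E1 E2 :: real
  assumes "T > 0" "ln 2 \<le> L" "5 * L * \<sigma>\<^sup>2 \<le> T"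
    and "E1 \<le> 1 + \<sigma>\<^sup>2 / (2 * T) - 5 * L / 2" "E2 \<le> 1 + \<sigma>\<^sup>2 / (2 * T) - 5 * L / 2"
  shows "2 * T / exp 1 * (exp E1 + exp E2) \<le> 2 * exp (- L) * T"
proof -
  define \<delta> where "\<delta> = \<sigma>\<^sup>2 / (2 * T)"
  have ln2: "2 / 3 \<le> ln (2 :: real)"
    by (rule ln2_ge_two_thirds)
  have "10 / 3 * \<sigma>\<^sup>2 \<le> 5 * L * \<sigma>\<^sup>2"
    using assms(2) ln2 by (intro mult_right_mono) auto
  then have "\<delta> \<le> 3 / 20"
    using assms(1,3) by (simp add: \<delta>_def field_simps)
  have "2 * exp (\<delta> - 3 * L / 2) = exp (\<delta> - 3 * L / 2 + ln 2)"
    by (simp add: exp_add)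
  also have "\<dots> \<le> 1"
    using \<open>\<delta> \<le> 3 / 20\<close> assms(2) ln2 by simp
  finally have "2 * exp (\<delta> - 3 * L / 2) \<le> 1" .
  have "exp E1 \<le> exp (1 + \<delta> - 5 * L / 2)" "exp E2 \<le> exp (1 + \<delta> - 5 * L / 2)"
    using assms(4,5) by (simp_all add: \<delta>_def)
  then have "exp E1 + exp E2 \<le> 2 * exp (1 + \<delta> - 5 * L / 2)"
    by linarith
  then have "2 * T / exp 1 * (exp E1 + exp E2) \<le> 2 * T / exp 1 * (2 * exp (1 + \<delta> - 5 * L / 2))"
    using assms(1) by (intro mult_left_mono) auto
  also have "\<dots> = 2 * exp (- L) * T * (2 * exp (\<delta> - 3 * L / 2))"
    by (simp add: exp_add[symmetric] exp_diff field_simps)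
  also have "\<dots> \<le> 2 * exp (- L) * T"
    using \<open>2 * exp (\<delta> - 3 * L / 2) \<le> 1\<close> assms(1) by (simp add: mult_left_le)
  finally show ?thesis .
qed

lemma inner_EM_op_ge_of_snr:
  fixes \<theta>s \<theta> :: "'a::euclidean_space" and \<sigma> a r L :: real
  assumes "\<sigma> > 0" "\<theta>s \<noteq> 0" "0 < a" "a < 1" "r \<ge> 1" "\<theta> \<in> D_set \<theta>s a r" "ln 2 \<le> L"
    and snr: "5 * L * r\<^sup>2 * \<sigma>\<^sup>2 \<le> a\<^sup>2 * (norm \<theta>s)\<^sup>2"
  shows "(1 - 2 * exp (- L)) * (norm \<theta>s)\<^sup>2 \<le> inner (EM_op \<theta>s \<sigma> \<theta>) \<theta>s"
proof -
  define T c where "T = (norm \<theta>s)\<^sup>2" and "c = a / (r\<^sup>2 * \<sigma>\<^sup>2)"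
  define E where "E b = b \<bullet> \<theta>s + \<sigma>\<^sup>2 * (norm b)\<^sup>2 / 2" for b
  define bp bm where "bp = (1 / T) *\<^sub>R \<theta>s - c *\<^sub>R \<theta>" and "bm = (- (1 / T)) *\<^sub>R \<theta>s - c *\<^sub>R \<theta>"
  have T: "T > 0" and r2: "1 \<le> r\<^sup>2"
    using assms(2,5) by (simp_all add: T_def one_le_power)
  have "5 * L * \<sigma>\<^sup>2 \<le> 5 * L * r\<^sup>2 * \<sigma>\<^sup>2"
    using assms(7) ln2_ge_two_thirds r2 by (simp add: mult_right_mono)
  also have "\<dots> \<le> a\<^sup>2 * T"
    using snr by (simp add: T_def)
  also have "\<dots> \<le> T"
    using assms(3,4) T by (intro mult_left_le_one_le) (auto simp: power_le_one)
  finally have "5 * L * \<sigma>\<^sup>2 \<le> T" .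
  have "E bp \<le> 1 + \<sigma>\<^sup>2 / (2 * T) - 5 * L / 2" and "E bm \<le> 1 + \<sigma>\<^sup>2 / (2 * T) - 5 * L / 2"
    using gauss_log_mgf_le[OF assms(1-6) _ snr, of 1] gauss_log_mgf_le[OF assms(1-6) _ snr, of "- 1"]
    by (simp_all add: E_def T_def c_def bp_def bm_def)
  then have "2 * T / exp 1 * (exp (E bp) + exp (E bm)) \<le> 2 * exp (- L) * T"
    by (rule exp_exponent_sum_le[OF T assms(7) \<open>5 * L * \<sigma>\<^sup>2 \<le> T\<close>])
  moreover have "T - 2 * T / exp 1 * (exp (E bp) + exp (E bm)) \<le> inner (EM_op \<theta>s \<sigma> \<theta>) \<theta>s"
  proof -
    have "c * \<sigma>\<^sup>2 \<le> 2"
      using assms(1,4) r2 by (simp add: c_def divide_le_eq)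
    then show ?thesis
      using inner_EM_op_ge[OF assms(1) _ _, of "1 / T" c \<theta>s \<theta>] T assms(1,3)
      unfolding E_def T_def bp_def bm_def c_def by simp
  qed
  ultimately show ?thesis
    unfolding left_diff_distrib T_def by linarith
qed

lemma sq_le_of_le_div_sqrt:
  fixes r A B :: real
  assumes "0 \<le> r" "0 < B" "r \<le> A / sqrt B"
  shows "B * r\<^sup>2 \<le> A\<^sup>2"
proof -
  have "r * sqrt B \<le> A"
    using assms by (simp add: pos_le_divide_eq)
  then have "(r * sqrt B)\<^sup>2 \<le> A\<^sup>2"
    using assms(1,2) by (intro power_mono) auto
  then show ?thesis
    using assms(2) by (simp add: power_mult_distrib mult.commute)
qed

theorem lemma2:
  fixes \<theta>s :: "'a::euclidean_space" and \<sigma> a r \<kappa>1 :: real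
  assumes "\<sigma> > 0" and "\<theta>s \<noteq> 0"
    and "0 < a" and "a < 1" and "r \<ge> 1"
    and "a < \<kappa>1" and "\<kappa>1 < 1"
    and "r \<le> a * (norm \<theta>s / \<sigma>) / sqrt (5 * ln (2 / (1 - a / \<kappa>1)))"
    and "\<theta> \<in> D_set \<theta>s a r"
  shows "inner (EM_op \<theta>s \<sigma> \<theta>) \<theta>s \<ge> (a / \<kappa>1) * (norm \<theta>s)\<^sup>2"
proof -
  define L where "L = ln (2 / (1 - a / \<kappa>1))"
  have q: "0 < a / \<kappa>1" "a / \<kappa>1 < 1"
    using assms(3,6,7) by auto
  then have L: "ln 2 \<le> L" and q_eq: "1 - 2 * exp (- L) = a / \<kappa>1"
    using assms(3,6) by (auto simp: L_def exp_minus field_simps)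
  have "5 * L * r\<^sup>2 \<le> (a * (norm \<theta>s / \<sigma>))\<^sup>2"
    using sq_le_of_le_div_sqrt[OF _ _ assms(8)[folded L_def]] assms(5) L ln2_ge_two_thirds
    by simp
  then have "5 * L * r\<^sup>2 * \<sigma>\<^sup>2 \<le> a\<^sup>2 * (norm \<theta>s)\<^sup>2"
    using assms(1) by (simp add: power_mult_distrib power_divide field_simps)
  from inner_EM_op_ge_of_snr[OF assms(1-5,9) L this] show ?thesis
    unfolding q_eq .
qed

end
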